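(* Let $\Gamma=\langle V,(w_u)_{u\in V},\alpha,\beta\rangle$ be a star celebrity game with $\beta>1$. For every Nash equilibrium $S$ of $\Gamma$ whose outcome graph $G[S]$ is a tree, $C(S)\le 2\,\mathrm{opt}(\Gamma)$.
   Context: A celebrity game $\Gamma=\langle V,(w_u)_{u\in V},\alpha,\beta\rangle$ consists of a set of players $V=\{1,\dots,n\}$, celebrity weights $w_u>0$, a link cost $\alpha>0$ and a critical distance $\beta$ with $1\le\beta\le n-1$. A strategy of player $u$ is a set $S_u\subseteq V\setminus\{u\}$; a strategy profile is $S=(S_1,\dots,S_n)$; its outcome graph $G[S]$ is the undirected graph on $V$ with edge set $\{\{u,v\}: u\in S_v\text{ or }v\in S_u\}$. With $d_G$ the graph distance (infinite between different connected components), the cost of player $u$ is $c_u(S)=\alpha|S_u|+\sum_{v:\,d_{G[S]}(u,v)>\beta}w_v$ and the social cost is $C(S)=\sum_{u\in V}c_u(S)$. $S$ is a Nash equilibrium (NE) if no player can strictly decrease its cost by changing only its own strategy; a graph is an NE graph if it equals $G[S]$ for some NE $S$. $\mathrm{opt}(\Gamma)=\min_S C(S)$. $\Gamma$ is a star celebrity game if it has an NE graph that is connected. *)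

theory Defs
  imports Main "HOL-Library.Extended_Nat"
begin

text \<open>Players are V = {1..n}. A strategy profile is S :: nat => nat set;
 S u is the set of players u buys links to. Only profiles with
 S u a subset of V - {u} for u in V are valid.\<close>

definition players :: "nat \<Rightarrow> nat set" where
  "players n = {1..n}"

definition valid_profile :: "nat \<Rightarrow> (nat \<Rightarrow> nat set) \<Rightarrow> bool" where
  "valid_profile n S \<longleftrightarrow> (\<forall>u\<in>players n. S u \<subseteq> players n - {u})"

definition adj :: "nat \<Rightarrow> (nat \<Rightarrow> nat set) \<Rightarrow> nat \<Rightarrow> nat \<Rightarrow> bool" where
  "adj n S u v \<longleftrightarrow> u \<in> players n \<and> v \<in> players n \<and> (u \<in> S v \<or> v \<in> S u)"

definition edges :: "nat \<Rightarrow> (nat \<Rightarrow> nat set) \<Rightarrow> nat set set" where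
  "edges n S = {{u, v} | u v. adj n S u v}"

definition gdist :: "nat \<Rightarrow> (nat \<Rightarrow> nat set) \<Rightarrow> nat \<Rightarrow> nat \<Rightarrow> enat" where
  "gdist n S u v =
     (if \<exists>k. (adj n S ^^ k) u v then enat (LEAST k. (adj n S ^^ k) u v) else \<infinity>)"

definition cost :: "nat \<Rightarrow> (nat \<Rightarrow> real) \<Rightarrow> real \<Rightarrow> nat \<Rightarrow> (nat \<Rightarrow> nat set) \<Rightarrow> nat \<Rightarrow> real" where
  "cost n w \<alpha> \<beta> S u =
     \<alpha> * real (card (S u)) + (\<Sum>v\<in>{v\<in>players n. gdist n S u v > enat \<beta>}. w v)"

definition social_cost :: "nat \<Rightarrow> (nat \<Rightarrow> real) \<Rightarrow> real \<Rightarrow> nat \<Rightarrow> (nat \<Rightarrow> nat set) \<Rightarrow> real" where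
  "social_cost n w \<alpha> \<beta> S = (\<Sum>u\<in>players n. cost n w \<alpha> \<beta> S u)"

definition is_NE :: "nat \<Rightarrow> (nat \<Rightarrow> real) \<Rightarrow> real \<Rightarrow> nat \<Rightarrow> (nat \<Rightarrow> nat set) \<Rightarrow> bool" where
  "is_NE n w \<alpha> \<beta> S \<longleftrightarrow> valid_profile n S \<and>
     (\<forall>u\<in>players n. \<forall>T. T \<subseteq> players n - {u} \<longrightarrow>
        cost n w \<alpha> \<beta> S u \<le> cost n w \<alpha> \<beta> (S(u := T)) u)"

definition opt :: "nat \<Rightarrow> (nat \<Rightarrow> real) \<Rightarrow> real \<Rightarrow> nat \<Rightarrow> real" where
  "opt n w \<alpha> \<beta> = (LEAST c. \<exists>S. valid_profile n S \<and> c = social_cost n w \<alpha> \<beta> S)"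

definition connected_graph :: "nat \<Rightarrow> (nat \<Rightarrow> nat set) \<Rightarrow> bool" where
  "connected_graph n S \<longleftrightarrow> (\<forall>u\<in>players n. \<forall>v\<in>players n. gdist n S u v \<noteq> \<infinity>)"

definition is_tree :: "nat \<Rightarrow> (nat \<Rightarrow> nat set) \<Rightarrow> bool" where
  "is_tree n S \<longleftrightarrow> connected_graph n S \<and> card (edges n S) = n - 1"

definition star_celebrity_game :: "nat \<Rightarrow> (nat \<Rightarrow> real) \<Rightarrow> real \<Rightarrow> nat \<Rightarrow> bool" where
  "star_celebrity_game n w \<alpha> \<beta> \<longleftrightarrow>
     (\<exists>S. is_NE n w \<alpha> \<beta> S \<and> connected_graph n S)"

end

theory Submission
  imports Defs "HOL-Library.FuncSet"
begin

text \<open>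
  Every profile with m edges leaves each player v beyond the critical distance of at least
  n - 1 - m players (a component has at most m + 1 vertices), so it costs at least
  \<alpha> m + W (n - 1 - m) \<ge> \<alpha> (n - 1) as soon as \<alpha> \<le> W, the total weight; and \<alpha> \<le> W holds because
  no link of an equilibrium is worth dropping. Hence opt \<ge> \<alpha> (n - 1).

  Conversely let S be an equilibrium tree. No link is bought twice, so S buys exactly n - 1
  links. The diameter of the tree is at most \<beta> + 1: the ends of a longest path are leaves; a
  leaf whose link is bought by its neighbour q would be dropped by q unless its weight is at
  least \<alpha>, yet a player far from q gets rid of both the leaf and q by linking to q; and two
  far apart leaves buying their own links would each prefer to link to the other's neighbour.
  So a player u with a vertex y at distance \<beta> + 1 removes all its far vertices by linking to
  the vertex two steps from u on the path to y, whence every player pays at most \<alpha> for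
  celebrities, and the neighbour of u on that path pays nothing. Altogether
  C(S) \<le> 2 \<alpha> (n - 1) \<le> 2 opt.
\<close>

section \<open>Walk distances in a relation\<close>

text \<open>\<open>hops R x y\<close> is the length of a shortest \<open>R\<close>-walk from \<open>x\<close> to \<open>y\<close>; it is unspecified
  when there is none.\<close>
definition hops :: "('a \<Rightarrow> 'a \<Rightarrow> bool) \<Rightarrow> 'a \<Rightarrow> 'a \<Rightarrow> nat" where
  "hops R x y = (LEAST k. (R ^^ k) x y)"

definition walk_dist :: "('a \<Rightarrow> 'a \<Rightarrow> bool) \<Rightarrow> 'a \<Rightarrow> 'a \<Rightarrow> enat" where
  "walk_dist R x y = (if \<exists>k. (R ^^ k) x y then enat (hops R x y) else \<infinity>)"

definition pendant :: "('a \<Rightarrow> 'a \<Rightarrow> bool) \<Rightarrow> 'a \<Rightarrow> 'a \<Rightarrow> bool" where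
  "pendant R l q \<longleftrightarrow> R l q \<and> (\<forall>z. R l z \<longrightarrow> z = q)"

lemma gdist_eq_walk_dist: "gdist n S = walk_dist (adj n S)"
  by (simp add: fun_eq_iff gdist_def walk_dist_def hops_def)

lemma hops_le: "(R ^^ k) x y \<Longrightarrow> hops R x y \<le> k"
  unfolding hops_def by (rule Least_le)

lemma relpowp_hops: "(R ^^ k) x y \<Longrightarrow> (R ^^ hops R x y) x y"
  unfolding hops_def by (rule LeastI)

lemma hops_self [simp]: "hops R x x = 0"
  using hops_le[of 0 R x x] by simp

lemma hops_eq_0_imp_eq: "(R ^^ k) x y \<Longrightarrow> hops R x y = 0 \<Longrightarrow> x = y"
  using relpowp_hops[of k R x y] by simp

lemma hops_le_1: "R x y \<Longrightarrow> hops R x y \<le> 1"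
  using hops_le[of 1 R x y] by (metis relpowp_1)

lemma hops_edge:
  assumes "R x y" and "(R ^^ k) y z"
  shows "hops R x z \<le> Suc (hops R y z)"
  using hops_le relpowp_Suc_I2[OF assms(1) relpowp_hops[OF assms(2)]] .

lemma hops_SucE:
  assumes "hops R x z = Suc m" and "(R ^^ k) x z"
  obtains y where "R x y" and "hops R y z = m"
proof -
  have "(R ^^ Suc m) x z" using relpowp_hops[OF assms(2)] assms(1) by simp
  then obtain y where y: "R x y" "(R ^^ m) y z" by (blast elim: relpowp_Suc_E2)
  have "hops R y z = m"
    using hops_le[OF y(2)] hops_edge[OF y] assms(1) by simp
  with y(1) show thesis by (rule that)
qed

lemma relpowp_sym:
  assumes "symp R" and "(R ^^ k) x y"
  shows "(R ^^ k) y x"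
  using assms(2)
proof (induction k arbitrary: x)
  case 0
  then show ?case by simp
next
  case (Suc k)
  then obtain z where "R x z" "(R ^^ k) z y" by (blast elim: relpowp_Suc_E2)
  with Suc.IH assms(1) show ?case by (metis relpowp_Suc_I sympD)
qed

lemma hops_sym:
  assumes "symp R" and "(R ^^ k) x y"
  shows "hops R x y = hops R y x"
proof -
  have "(R ^^ k) y x" using relpowp_sym[OF assms] .
  then show ?thesis
    using hops_le relpowp_sym[OF assms(1)] relpowp_hops assms(2) by (metis le_antisym)
qed

lemma walk_dist_eq_hops: "(R ^^ k) x y \<Longrightarrow> walk_dist R x y = enat (hops R x y)"
  unfolding walk_dist_def by auto

lemma walk_dist_le: "(R ^^ k) x y \<Longrightarrow> walk_dist R x y \<le> enat k"
  by (simp add: walk_dist_eq_hops hops_le)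

lemma walk_dist_self [simp]: "walk_dist R x x = 0"
  using walk_dist_eq_hops[of 0 R x x] by (simp add: zero_enat_def)

lemma walk_dist_edge:
  assumes "R x y"
  shows "walk_dist R x z \<le> eSuc (walk_dist R y z)"
proof (cases "\<exists>k. (R ^^ k) y z")
  case True
  then obtain k where k: "(R ^^ k) y z" by blast
  have "walk_dist R x z \<le> enat (Suc (hops R y z))"
    using walk_dist_le[OF relpowp_Suc_I2[OF assms relpowp_hops[OF k]]] .
  then show ?thesis using walk_dist_eq_hops[OF k] by (simp add: eSuc_enat)
next
  case False
  then show ?thesis by (simp add: walk_dist_def)
qed

lemma walk_dist_mono:
  assumes "\<And>x y. R x y \<Longrightarrow> R' x y"
  shows "walk_dist R' x y \<le> walk_dist R x y"
proof (cases "\<exists>k. (R ^^ k) x y")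
  case True
  then obtain k where k: "(R ^^ k) x y" by blast
  have "(R' ^^ hops R x y) x y"
    using relpowp_mono[of R R'] assms relpowp_hops[OF k] by blast
  then show ?thesis using walk_dist_le walk_dist_eq_hops[OF k] by metis
next
  case False
  then show ?thesis by (simp add: walk_dist_def)
qed

text \<open>A walk entering the pendant vertex \<open>l\<close> must leave it at once back to \<open>q\<close>,
  so the detour can be cut out.\<close>
lemma relpowp_avoid_pendant:
  assumes "symp R" and pendant: "pendant R l q"
    and R': "\<And>x y. R x y \<Longrightarrow> x \<noteq> l \<Longrightarrow> y \<noteq> l \<Longrightarrow> R' x y"
  shows "(R ^^ k) x y \<Longrightarrow> x \<noteq> l \<Longrightarrow> y \<noteq> l \<Longrightarrow> \<exists>j\<le>k. (R' ^^ j) x y"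
proof (induction k arbitrary: x rule: less_induct)
  case (less k)
  show ?case
  proof (cases k)
    case 0
    then show ?thesis using less.prems by auto
  next
    case (Suc m)
    then obtain z where z: "R x z" "(R ^^ m) z y" using less.prems(1) by (blast elim: relpowp_Suc_E2)
    show ?thesis
    proof (cases "z = l")
      case False
      then obtain j where j: "j \<le> m" "(R' ^^ j) z y" using less.IH[of m z] Suc z less.prems by auto
      have "(R' ^^ Suc j) x y" using relpowp_Suc_I2[OF R'[OF z(1) less.prems(2) False] j(2)] .
      then show ?thesis using j(1) Suc by (intro exI[of _ "Suc j"]) simp
    next
      case True
      with z(2) less.prems(3) obtain m' where m': "m = Suc m'" by (cases m) auto
      then obtain z' where z': "R l z'" "(R ^^ m') z' y" using z True by (blast elim: relpowp_Suc_E2)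
      have "z' = q" and "x = q"
        using pendant z'(1) z(1) True sympD[OF assms(1)] unfolding pendant_def by blast+
      then have "(R ^^ m') x y" using z'(2) by simp
      then obtain j where "j \<le> m'" "(R' ^^ j) x y" using less.IH[of m' x] Suc m' less.prems by auto
      then show ?thesis using Suc m' by (intro exI[of _ j]) simp
    qed
  qed
qed

lemma walk_dist_avoid_pendant:
  assumes "symp R" and "pendant R l q"
    and "\<And>x y. R x y \<Longrightarrow> x \<noteq> l \<Longrightarrow> y \<noteq> l \<Longrightarrow> R' x y"
    and "x \<noteq> l" and "y \<noteq> l"
  shows "walk_dist R' x y \<le> walk_dist R x y"
proof (cases "\<exists>k. (R ^^ k) x y")
  case True
  then obtain k where k: "(R ^^ k) x y" by blast
  obtain j where "j \<le> hops R x y" "(R' ^^ j) x y"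
    using relpowp_avoid_pendant[where R'=R', OF assms(1-3) relpowp_hops[OF k] assms(4,5)] by blast
  then show ?thesis
    using walk_dist_le[of j R' x y] walk_dist_eq_hops[OF k] by (simp add: order_trans)
next
  case False
  then show ?thesis by (simp add: walk_dist_def)
qed

section \<open>Finite graphs and trees\<close>

definition edge_set :: "('a \<Rightarrow> 'a \<Rightarrow> bool) \<Rightarrow> 'a set set" where
  "edge_set R = {{x, y} | x y. R x y}"

definition reachable_from :: "('a \<Rightarrow> 'a \<Rightarrow> bool) \<Rightarrow> 'a \<Rightarrow> 'a set" where
  "reachable_from R r = {u. \<exists>k. (R ^^ k) r u}"

locale fin_graph =
  fixes V :: "'a set" and R :: "'a \<Rightarrow> 'a \<Rightarrow> bool"
  assumes finite_V: "finite V"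
    and sym_R: "symp R"
    and edge_in_V: "R x y \<Longrightarrow> x \<in> V \<and> y \<in> V"
    and irrefl_R: "\<not> R x x"
begin

lemma finite_edge_set: "finite (edge_set R)"
proof -
  have "edge_set R \<subseteq> Pow V" unfolding edge_set_def using edge_in_V by auto
  then show ?thesis using finite_V by (meson finite_Pow_iff finite_subset)
qed

lemma reachable_from_subset: "reachable_from R r \<subseteq> insert r V"
proof
  fix u assume "u \<in> reachable_from R r"
  then obtain k where k: "(R ^^ k) r u" unfolding reachable_from_def by blast
  show "u \<in> insert r V"
  proof (cases k)
    case 0
    then show ?thesis using k by simp
  next
    case (Suc j)
    then obtain p where "R p u" using k by (blast elim: relpowp_Suc_E)
    then show ?thesis using edge_in_V by blast
  qed
qed

lemma pendant_in_V: "pendant R l q \<Longrightarrow> l \<in> V \<and> q \<in> V"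
  unfolding pendant_def using edge_in_V by blast

lemma finite_reachable_from: "finite (reachable_from R r)"
  using reachable_from_subset finite_V finite_subset by blast

lemma farthest_pair_exists:
  assumes "V \<noteq> {}"
  obtains a b where "a \<in> V" and "b \<in> V"
    and "\<And>x y. x \<in> V \<Longrightarrow> y \<in> V \<Longrightarrow> hops R x y \<le> hops R a b"
proof -
  define D where "D = case_prod (hops R) ` (V \<times> V)"
  have "finite D" and "D \<noteq> {}" using finite_V assms by (auto simp: D_def)
  then have "Max D \<in> D" by (rule Max_in)
  then obtain a b where ab: "a \<in> V" "b \<in> V" "hops R a b = Max D" unfolding D_def by auto
  have "hops R x y \<le> hops R a b" if "x \<in> V" "y \<in> V" for x y
  proof -
    have "hops R x y \<in> D" using that unfolding D_def by force
    then show ?thesis using Max_ge[OF \<open>finite D\<close>] ab(3) by simp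
  qed
  with ab(1,2) show thesis by (rule that)
qed

lemma parent_exists:
  assumes "u \<in> reachable_from R r - {r}"
  shows "\<exists>p. R u p \<and> Suc (hops R r p) = hops R r u \<and> p \<in> reachable_from R r"
proof -
  obtain k where k: "(R ^^ k) r u" and "u \<noteq> r" using assms unfolding reachable_from_def by auto
  then have "hops R r u \<noteq> 0" using hops_eq_0_imp_eq by metis
  then obtain m where m: "hops R r u = Suc m" using not0_implies_Suc by blast
  then have "(R ^^ Suc m) r u" using relpowp_hops[OF k] by simp
  then obtain p where p: "(R ^^ m) r p" "R p u" by (blast elim: relpowp_Suc_E)
  have "hops R r u \<le> Suc (hops R r p)"
    using hops_le relpowp_Suc_I[OF relpowp_hops[OF p(1)] p(2)] .
  then have "Suc (hops R r p) = hops R r u" using hops_le[OF p(1)] m by simp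
  then show ?thesis using p sympD[OF sym_R] unfolding reachable_from_def by blast
qed

definition parent :: "'a \<Rightarrow> 'a \<Rightarrow> 'a" where
  "parent r u = (SOME p. R u p \<and> Suc (hops R r p) = hops R r u \<and> p \<in> reachable_from R r)"

lemma parentD:
  assumes "u \<in> reachable_from R r - {r}"
  shows "R u (parent r u)" and "Suc (hops R r (parent r u)) = hops R r u"
    and "parent r u \<in> reachable_from R r"
  using someI_ex[OF parent_exists[OF assms]] unfolding parent_def by auto

lemma inj_on_parent_edge: "inj_on (\<lambda>u. {u, parent r u}) (reachable_from R r - {r})"
proof (rule inj_onI)
  fix u v
  assume u: "u \<in> reachable_from R r - {r}" and v: "v \<in> reachable_from R r - {r}"
    and eq: "{u, parent r u} = {v, parent r v}"
  show "u = v"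
  proof (rule ccontr)
    assume "u \<noteq> v"
    then have "u = parent r v" "v = parent r u" using eq by (auto simp: doubleton_eq_iff)
    then show False using parentD(2)[OF u] parentD(2)[OF v] by simp
  qed
qed

lemma parent_edge_in_edge_set:
  "(\<lambda>u. {u, parent r u}) ` (reachable_from R r - {r}) \<subseteq> edge_set R"
  unfolding edge_set_def using parentD(1) by blast

lemma card_reachable_from_le: "card (reachable_from R r) \<le> Suc (card (edge_set R))"
proof -
  have "card (reachable_from R r - {r}) \<le> card (edge_set R)"
    using card_inj_on_le[OF inj_on_parent_edge parent_edge_in_edge_set finite_edge_set] .
  then show ?thesis by (simp add: card_Diff_singleton_if split: if_splits)
qed

end

locale fin_tree = fin_graph +
  assumes connected: "x \<in> V \<Longrightarrow> y \<in> V \<Longrightarrow> \<exists>k. (R ^^ k) x y"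
    and card_edge_set: "card (edge_set R) = card V - 1"
begin

lemma reachable_from_eq: "r \<in> V \<Longrightarrow> reachable_from R r = V"
  using reachable_from_subset connected unfolding reachable_from_def by blast

lemma parent_edges_eq_edge_set:
  assumes "r \<in> V"
  shows "(\<lambda>u. {u, parent r u}) ` (V - {r}) = edge_set R"
proof (rule card_subset_eq[OF finite_edge_set])
  show "(\<lambda>u. {u, parent r u}) ` (V - {r}) \<subseteq> edge_set R"
    using parent_edge_in_edge_set reachable_from_eq[OF assms] by metis
  have "card ((\<lambda>u. {u, parent r u}) ` (V - {r})) = card (V - {r})"
    using card_image inj_on_parent_edge reachable_from_eq[OF assms] by metis
  then show "card ((\<lambda>u. {u, parent r u}) ` (V - {r})) = card (edge_set R)"
    using card_edge_set assms finite_V by simp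
qed

text \<open>This is where the edge count of a tree is used.\<close>
lemma edge_away_from_root:
  assumes r: "r \<in> V" and uq: "R u q" and le: "hops R r q \<le> hops R r u"
  shows "u \<in> V - {r}" and "q = parent r u"
proof -
  have "{u, q} \<in> edge_set R" unfolding edge_set_def using uq by blast
  then obtain x where x: "x \<in> V - {r}" "{u, q} = {x, parent r x}"
    using parent_edges_eq_edge_set[OF r] by blast
  have "u \<noteq> q" using uq irrefl_R by auto
  moreover have "\<not> (x = q \<and> parent r x = u)"
    using parentD(2)[of x r] x(1) reachable_from_eq[OF r] le by auto
  ultimately have "x = u \<and> parent r x = q" using x(2) by (auto simp: doubleton_eq_iff)
  then show "u \<in> V - {r}" and "q = parent r u" using x(1) by auto
qed

lemma hops_neighbor_closer:
  assumes "r \<in> V" and "R u q" and "hops R r q \<le> hops R r u"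
  shows "Suc (hops R r q) = hops R r u"
  using edge_away_from_root[OF assms] parentD(2) reachable_from_eq[OF assms(1)] by metis

lemma neighbor_closer_unique:
  assumes "r \<in> V" and "R u q" and "hops R r q \<le> hops R r u"
    and "R u q'" and "hops R r q' \<le> hops R r u"
  shows "q' = q"
  using edge_away_from_root(2)[OF assms(1-3)] edge_away_from_root(2)[OF assms(1,4,5)] by simp

lemma hops_adjacent_cases:
  assumes "r \<in> V" and "R u q"
  shows "Suc (hops R r q) = hops R r u \<or> Suc (hops R r u) = hops R r q"
  using hops_neighbor_closer[OF assms] hops_neighbor_closer[OF assms(1) sympD[OF sym_R assms(2)]]
  by linarith

lemma hops_commute: "x \<in> V \<Longrightarrow> y \<in> V \<Longrightarrow> hops R x y = hops R y x"
  using connected hops_sym[OF sym_R] by blast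

lemma hops_neighbor_le: "R x y \<Longrightarrow> z \<in> V \<Longrightarrow> hops R x z \<le> Suc (hops R y z)"
  using connected edge_in_V hops_edge by metis

lemma hops_SucD:
  assumes "x \<in> V" and "z \<in> V" and "hops R x z = Suc m"
  obtains y where "R x y" and "hops R y z = m"
  using connected[OF assms(1,2)] hops_SucE[OF assms(3)] by blast

lemma hops_eq_0_iff: "x \<in> V \<Longrightarrow> y \<in> V \<Longrightarrow> hops R x y = 0 \<longleftrightarrow> x = y"
  using connected hops_eq_0_imp_eq by fastforce

text \<open>Induction along a shortest walk from \<open>a\<close> to \<open>c\<close>: every step keeps moving away from \<open>r\<close>,
  because the previous vertex is the only neighbour closer to \<open>r\<close>.\<close>
lemma hops_via_edge:
  assumes r: "r \<in> V" and ab: "R a b" and rb: "hops R r b = Suc (hops R r a)"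
    and c: "c \<in> V" and ac: "hops R a c = Suc (hops R b c)"
  shows "hops R r c = hops R r a + hops R a c"
  using ab rb ac
proof (induction "hops R b c" arbitrary: a b)
  case 0
  then have "b = c" using hops_eq_0_iff[of b c] c edge_in_V by simp
  then show ?case using 0 by simp
next
  case (Suc m)
  have b: "b \<in> V" using edge_in_V Suc.prems(1) by blast
  obtain b' where b': "R b b'" "hops R b' c = m" using hops_SucD[OF b c Suc.hyps(2)[symmetric]] .
  have "a \<noteq> b'"
  proof
    assume "a = b'"
    then show False using Suc.prems(3) b'(2) Suc.hyps(2) by simp
  qed
  then have "\<not> hops R r b' \<le> hops R r b"
    using neighbor_closer_unique[OF r b'(1) _ sympD[OF sym_R Suc.prems(1)]] Suc.prems(2) by fastforce
  then have "hops R r b' = Suc (hops R r b)" using hops_adjacent_cases[OF r b'(1)] by linarith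
  then have "hops R r c = hops R r b + hops R b c"
    using Suc.hyps(1)[OF b'(2)[symmetric] b'(1)] b'(2) Suc.hyps(2) by simp
  then show ?case using Suc.prems by simp
qed

lemma hops_toward:
  assumes r: "r \<in> V" and ab: "R a b" and c: "c \<in> V"
    and ac: "hops R a c = Suc (hops R b c)" and short: "hops R r c < hops R r a + hops R a c"
  shows "Suc (hops R r b) = hops R r a"
proof -
  have "Suc (hops R r a) \<noteq> hops R r b"
  proof
    assume "Suc (hops R r a) = hops R r b"
    then have "hops R r c = hops R r a + hops R a c" using hops_via_edge[OF r ab _ c ac] by metis
    with short show False by linarith
  qed
  then show ?thesis using hops_adjacent_cases[OF r ab] by blast
qed

lemma hops_from_pendant:
  assumes "pendant R l q" and y: "y \<in> V" "y \<noteq> l"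
  shows "hops R l y = Suc (hops R q y)"
proof -
  have l: "l \<in> V" using pendant_in_V[OF assms(1)] by blast
  have "hops R l y \<noteq> 0" using hops_eq_0_iff[OF l y(1)] y(2) by simp
  then obtain m where m: "hops R l y = Suc m" using not0_implies_Suc by blast
  obtain z where "R l z" "hops R z y = m" using hops_SucD[OF l y(1) m] .
  then show ?thesis using assms(1) m unfolding pendant_def by auto
qed

lemma farthest_is_pendant:
  assumes u: "u \<in> V" and v: "v \<in> V" and uv: "u \<noteq> v"
    and farthest: "\<And>x y. x \<in> V \<Longrightarrow> y \<in> V \<Longrightarrow> hops R x y \<le> hops R u v"
  obtains q where "pendant R v q"
proof -
  have "hops R v u \<noteq> 0" using hops_eq_0_iff[OF v u] uv by simp
  then obtain m where "hops R v u = Suc m" using not0_implies_Suc by blast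
  then obtain q where vq: "R v q" using hops_SucD[OF v u] by metis
  have "z = q" if "R v z" for z
    using neighbor_closer_unique[OF u vq _ that] farthest u edge_in_V vq that by blast
  with vq show thesis using that unfolding pendant_def by blast
qed

end

section \<open>Celebrity games\<close>

lemma finite_players [simp]: "finite (players n)"
  by (simp add: players_def)

lemma card_players [simp]: "card (players n) = n"
  by (simp add: players_def)

lemma symp_adj: "symp (adj n S)"
  by (auto simp: symp_def adj_def)

lemma adj_in_players: "adj n S x y \<Longrightarrow> x \<in> players n \<and> y \<in> players n"
  by (simp add: adj_def)

lemma fin_graph_adj:
  assumes "valid_profile n S"
  shows "fin_graph (players n) (adj n S)"
proof (unfold_locales)
  show "finite (players n)" by simp
  show "symp (adj n S)" by (rule symp_adj)
  show "adj n S x y \<Longrightarrow> x \<in> players n \<and> y \<in> players n" for x y by (rule adj_in_players)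
  show "\<not> adj n S x x" for x using assms by (auto simp: adj_def valid_profile_def)
qed

lemma edges_eq_edge_set: "edges n S = edge_set (adj n S)"
  by (simp add: edges_def edge_set_def)

lemma finite_strategy: "valid_profile n S \<Longrightarrow> u \<in> players n \<Longrightarrow> finite (S u)"
  unfolding valid_profile_def by (meson finite_players finite_Diff finite_subset)

lemma edges_eq_links:
  assumes "valid_profile n S"
  shows "edges n S = (\<lambda>(u, v). {u, v}) ` Sigma (players n) S"
  using assms unfolding edges_def adj_def valid_profile_def by (auto simp: insert_commute)

lemma card_edges_le_links:
  assumes "valid_profile n S"
  shows "card (edges n S) \<le> (\<Sum>u\<in>players n. card (S u))"
  using card_image_le[of "Sigma (players n) S" "\<lambda>(u, v). {u, v}"]
    card_SigmaI[of "players n" S] finite_strategy[OF assms] edges_eq_links[OF assms]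
  by simp

definition far :: "nat \<Rightarrow> (nat \<Rightarrow> nat set) \<Rightarrow> nat \<Rightarrow> nat \<Rightarrow> nat set" where
  "far n S \<beta> u = {v \<in> players n. enat \<beta> < gdist n S u v}"

lemma cost_eq: "cost n w \<alpha> \<beta> S u = \<alpha> * real (card (S u)) + sum w (far n S \<beta> u)"
  by (simp add: cost_def far_def)

lemma social_cost_eq:
  "social_cost n w \<alpha> \<beta> S
     = \<alpha> * real (\<Sum>u\<in>players n. card (S u)) + (\<Sum>u\<in>players n. sum w (far n S \<beta> u))"
  by (simp add: social_cost_def cost_eq sum.distrib sum_distrib_left)

lemma NE_deviation:
  assumes "is_NE n w \<alpha> \<beta> S" and "u \<in> players n" and "T \<subseteq> players n - {u}"
  shows "\<alpha> * real (card (S u)) + sum w (far n S \<beta> u)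
           \<le> \<alpha> * real (card T) + sum w (far n (S(u := T)) \<beta> u)"
  using assms unfolding is_NE_def cost_eq by fastforce

lemma NE_drop_link:
  assumes NE: "is_NE n w \<alpha> \<beta> S" and u: "u \<in> players n" and v: "v \<in> S u"
  shows "\<alpha> + sum w (far n S \<beta> u) \<le> sum w (far n (S(u := S u - {v})) \<beta> u)"
proof -
  have valid: "valid_profile n S" using NE is_NE_def by blast
  have "S u - {v} \<subseteq> players n - {u}" using valid u unfolding valid_profile_def by auto
  then have "\<alpha> * real (card (S u)) + sum w (far n S \<beta> u)
      \<le> \<alpha> * real (card (S u - {v})) + sum w (far n (S(u := S u - {v})) \<beta> u)"
    by (rule NE_deviation[OF NE u])
  moreover have "card (S u) = Suc (card (S u - {v}))"
    using card_Suc_Diff1[OF finite_strategy[OF valid u] v] by simp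
  ultimately show ?thesis by (simp add: algebra_simps)
qed

lemma NE_add_link:
  assumes NE: "is_NE n w \<alpha> \<beta> S" and u: "u \<in> players n"
    and x: "x \<in> players n" "x \<noteq> u" "x \<notin> S u"
  shows "sum w (far n S \<beta> u) \<le> \<alpha> + sum w (far n (S(u := insert x (S u))) \<beta> u)"
proof -
  have valid: "valid_profile n S" using NE is_NE_def by blast
  have "insert x (S u) \<subseteq> players n - {u}" using valid u x unfolding valid_profile_def by auto
  then have "\<alpha> * real (card (S u)) + sum w (far n S \<beta> u)
      \<le> \<alpha> * real (card (insert x (S u))) + sum w (far n (S(u := insert x (S u))) \<beta> u)"
    by (rule NE_deviation[OF NE u])
  moreover have "card (insert x (S u)) = Suc (card (S u))"
    using x(3) finite_strategy[OF valid u] by simp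
  ultimately show ?thesis by (simp add: algebra_simps)
qed

lemma NE_no_mutual_links:
  assumes NE: "is_NE n w \<alpha> \<beta> S" and "0 < \<alpha>" and u: "u \<in> players n" and v: "v \<in> S u"
  shows "u \<notin> S v"
proof
  assume "u \<in> S v"
  moreover have "v \<noteq> u"
    using NE u v unfolding is_NE_def valid_profile_def by blast
  ultimately have "adj n (S(u := S u - {v})) = adj n S" by (auto simp: fun_eq_iff adj_def)
  then have "far n (S(u := S u - {v})) \<beta> u = far n S \<beta> u" by (simp add: far_def gdist_def)
  then show False using NE_drop_link[OF NE u v] \<open>0 < \<alpha>\<close> by simp
qed

lemma card_edges_NE:
  assumes NE: "is_NE n w \<alpha> \<beta> S" and "0 < \<alpha>"
  shows "card (edges n S) = (\<Sum>u\<in>players n. card (S u))"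
proof -
  have valid: "valid_profile n S" using NE is_NE_def by blast
  have "inj_on (\<lambda>(u, v). {u, v}) (Sigma (players n) S)"
  proof (rule inj_onI, clarify)
    fix u v u' v'
    assume "u \<in> players n" "v \<in> S u" "u' \<in> players n" "v' \<in> S u'" "{u, v} = {u', v'}"
    then show "u = u' \<and> v = v'"
      using NE_no_mutual_links[OF NE \<open>0 < \<alpha>\<close>] by (auto simp: doubleton_eq_iff)
  qed
  then have "card (edges n S) = card (Sigma (players n) S)"
    using card_image edges_eq_links[OF valid] by metis
  also have "\<dots> = (\<Sum>u\<in>players n. card (S u))"
    using card_SigmaI[of "players n" S] finite_strategy[OF valid] by simp
  finally show ?thesis .
qed

lemma alpha_le_total_weight:
  assumes NE: "is_NE n w \<alpha> \<beta> S" and w: "\<forall>v\<in>players n. 0 \<le> w v"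
    and u: "u \<in> players n" and v: "v \<in> S u"
  shows "\<alpha> \<le> sum w (players n)"
proof -
  have "sum w (far n (S(u := S u - {v})) \<beta> u) \<le> sum w (players n)"
    by (rule sum_mono2) (use w in \<open>auto simp: far_def\<close>)
  moreover have "0 \<le> sum w (far n S \<beta> u)" by (rule sum_nonneg) (use w in \<open>auto simp: far_def\<close>)
  ultimately show ?thesis using NE_drop_link[OF NE u v] by linarith
qed

section \<open>A lower bound on the social optimum\<close>

lemma social_cost_restrict:
  "social_cost n w \<alpha> \<beta> (restrict S (players n)) = social_cost n w \<alpha> \<beta> S"
proof -
  have "adj n (restrict S (players n)) = adj n S" by (auto simp: fun_eq_iff adj_def)
  then show ?thesis unfolding social_cost_def cost_def gdist_def by (intro sum.cong) auto
qed

text \<open>Only finitely many social costs occur, so the \<open>LEAST\<close> defining \<open>opt\<close> is a minimum.\<close>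
lemma le_opt:
  assumes "\<And>S. valid_profile n S \<Longrightarrow> c \<le> social_cost n w \<alpha> \<beta> S"
  shows "c \<le> opt n w \<alpha> \<beta>"
proof -
  define C where "C = {c. \<exists>S. valid_profile n S \<and> c = social_cost n w \<alpha> \<beta> S}"
  have "C \<subseteq> social_cost n w \<alpha> \<beta> ` (players n \<rightarrow>\<^sub>E Pow (players n))"
  proof
    fix c assume "c \<in> C"
    then obtain S where S: "valid_profile n S" "c = social_cost n w \<alpha> \<beta> S" unfolding C_def by blast
    have "restrict S (players n) \<in> players n \<rightarrow>\<^sub>E Pow (players n)"
      using S(1) unfolding valid_profile_def by auto
    then show "c \<in> social_cost n w \<alpha> \<beta> ` (players n \<rightarrow>\<^sub>E Pow (players n))"
      using S(2) social_cost_restrict by (metis image_eqI)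
  qed
  then have "finite C" by (rule finite_subset) (intro finite_imageI finite_PiE; simp)
  moreover have "valid_profile n (\<lambda>_. {})" by (simp add: valid_profile_def)
  then have "C \<noteq> {}" unfolding C_def by blast
  ultimately have "Min C \<in> C" and "\<forall>c\<in>C. Min C \<le> c" by auto
  then have "opt n w \<alpha> \<beta> = Min C" unfolding opt_def C_def by (intro Least_equality) auto
  with \<open>Min C \<in> C\<close> show ?thesis using assms unfolding C_def by auto
qed

lemma card_not_far_le:
  assumes valid: "valid_profile n S" and v: "v \<in> players n"
  shows "card {u \<in> players n. v \<notin> far n S \<beta> u} \<le> Suc (card (edges n S))"
proof -
  interpret fin_graph "players n" "adj n S" using fin_graph_adj[OF valid] .
  have "{u \<in> players n. v \<notin> far n S \<beta> u} \<subseteq> reachable_from (adj n S) v"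
  proof
    fix u assume "u \<in> {u \<in> players n. v \<notin> far n S \<beta> u}"
    then have "gdist n S u v \<noteq> \<infinity>" using v by (cases "gdist n S u v") (auto simp: far_def)
    then obtain k where "(adj n S ^^ k) u v" by (auto simp: gdist_def split: if_splits)
    then show "u \<in> reachable_from (adj n S) v"
      unfolding reachable_from_def using relpowp_sym[OF symp_adj] by blast
  qed
  then have "card {u \<in> players n. v \<notin> far n S \<beta> u} \<le> card (reachable_from (adj n S) v)"
    by (rule card_mono[OF finite_reachable_from])
  also have "\<dots> \<le> Suc (card (edges n S))"
    using card_reachable_from_le by (simp add: edges_eq_edge_set)
  finally show ?thesis .
qed

lemma sum_far_weights_ge:
  assumes valid: "valid_profile n S" and w: "\<forall>v\<in>players n. 0 \<le> w v"
  shows "sum w (players n) * (real n - 1 - real (card (edges n S)))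
           \<le> (\<Sum>u\<in>players n. sum w (far n S \<beta> u))"
proof -
  let ?V = "players n"
  have count: "real n - 1 - real (card (edges n S)) \<le> real (card {u \<in> ?V. v \<in> far n S \<beta> u})"
    if v: "v \<in> ?V" for v
  proof -
    have "card ?V = card ({u \<in> ?V. v \<in> far n S \<beta> u} \<union> {u \<in> ?V. v \<notin> far n S \<beta> u})"
      by (rule arg_cong[where f=card]) blast
    also have "\<dots> = card {u \<in> ?V. v \<in> far n S \<beta> u} + card {u \<in> ?V. v \<notin> far n S \<beta> u}"
      by (rule card_Un_disjoint) auto
    finally have "n = card {u \<in> ?V. v \<in> far n S \<beta> u} + card {u \<in> ?V. v \<notin> far n S \<beta> u}"
      by simp
    then show ?thesis using card_not_far_le[OF valid v, of \<beta>] by linarith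
  qed
  have "sum w ?V * (real n - 1 - real (card (edges n S)))
          \<le> (\<Sum>v\<in>?V. w v * real (card {u \<in> ?V. v \<in> far n S \<beta> u}))"
    unfolding sum_distrib_right by (rule sum_mono) (use count w in \<open>auto intro: mult_left_mono\<close>)
  also have "\<dots> = (\<Sum>v\<in>?V. \<Sum>u\<in>?V. if v \<in> far n S \<beta> u then w v else 0)"
    by (simp add: sum.If_cases mult.commute Int_def)
  also have "\<dots> = (\<Sum>u\<in>?V. \<Sum>v\<in>?V. if v \<in> far n S \<beta> u then w v else 0)"
    by (rule sum.swap)
  also have "\<dots> = (\<Sum>u\<in>?V. sum w (far n S \<beta> u))"
    by (simp add: sum.If_cases far_def Int_def)
  finally show ?thesis .
qed

lemma social_cost_ge:
  assumes valid: "valid_profile n S" and w: "\<forall>v\<in>players n. 0 \<le> w v"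
    and "0 \<le> \<alpha>" and alpha_le: "\<alpha> \<le> sum w (players n)"
  shows "\<alpha> * (real n - 1) \<le> social_cost n w \<alpha> \<beta> S"
proof -
  let ?m = "real (card (edges n S))" and ?F = "\<Sum>u\<in>players n. sum w (far n S \<beta> u)"
  have "?m \<le> real (\<Sum>u\<in>players n. card (S u))"
    using card_edges_le_links[OF valid] by (simp only: of_nat_le_iff)
  then have links: "\<alpha> * ?m \<le> \<alpha> * real (\<Sum>u\<in>players n. card (S u))"
    using \<open>0 \<le> \<alpha>\<close> by (rule mult_left_mono)
  have "\<alpha> * (real n - 1) \<le> \<alpha> * ?m + ?F"
  proof (cases "?m \<le> real n - 1")
    case True
    then have "\<alpha> * (real n - 1 - ?m) \<le> sum w (players n) * (real n - 1 - ?m)"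
      using alpha_le by (intro mult_right_mono) auto
    then have "\<alpha> * (real n - 1 - ?m) \<le> ?F"
      using sum_far_weights_ge[OF valid w, of \<beta>] by linarith
    then show ?thesis by (simp add: algebra_simps)
  next
    case False
    then have "\<alpha> * (real n - 1) \<le> \<alpha> * ?m" using \<open>0 \<le> \<alpha>\<close> by (intro mult_left_mono) auto
    moreover have "0 \<le> ?F" by (intro sum_nonneg) (use w in \<open>auto simp: far_def\<close>)
    ultimately show ?thesis by linarith
  qed
  with links have "\<alpha> * (real n - 1) \<le> \<alpha> * real (\<Sum>u\<in>players n. card (S u)) + ?F"
    by linarith
  then show ?thesis by (simp only: social_cost_eq)
qed

section \<open>Equilibrium trees\<close>

locale NE_tree =
  fixes n :: nat and w :: "nat \<Rightarrow> real" and \<alpha> :: real and \<beta> :: nat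
    and S :: "nat \<Rightarrow> nat set"
  assumes NE: "is_NE n w \<alpha> \<beta> S" and tree: "is_tree n S" and beta_ge_2: "2 \<le> \<beta>"
    and weights_pos: "\<forall>u\<in>players n. 0 < w u" and alpha_pos: "0 < \<alpha>"
begin

abbreviation "V \<equiv> players n"
abbreviation "A \<equiv> adj n S"

lemma valid: "valid_profile n S"
  using NE is_NE_def by blast

lemma connected_adj: "x \<in> V \<Longrightarrow> y \<in> V \<Longrightarrow> \<exists>k. (A ^^ k) x y"
  using tree unfolding is_tree_def connected_graph_def gdist_def by (auto split: if_splits)

sublocale fin_tree V A
proof -
  interpret fin_graph V A using fin_graph_adj[OF valid] .
  show "fin_tree V A"
    by unfold_locales (use connected_adj tree in \<open>auto simp: is_tree_def edges_eq_edge_set\<close>)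
qed

lemma gdist_eq_hops: "x \<in> V \<Longrightarrow> y \<in> V \<Longrightarrow> gdist n S x y = enat (hops A x y)"
  using connected_adj walk_dist_eq_hops gdist_eq_walk_dist by metis

lemma far_eq: "u \<in> V \<Longrightarrow> far n S \<beta> u = {v \<in> V. \<beta> < hops A u v}"
  using gdist_eq_hops by (auto simp: far_def)

lemma weight_nonneg: "x \<in> V \<Longrightarrow> 0 \<le> w x"
  using weights_pos by force

lemma far_weight_le_add_link:
  assumes u: "u \<in> V" and x: "x \<in> V" "x \<noteq> u" "x \<notin> S u"
  shows "sum w (far n S \<beta> u) \<le> \<alpha> + sum w {v \<in> V. \<beta> < hops A u v \<and> \<beta> \<le> hops A x v}"
proof -
  define S' where "S' = S(u := insert x (S u))"
  have mono: "adj n S' p q" if "A p q" for p q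
    using that unfolding adj_def S'_def by auto
  have ux: "adj n S' u x" unfolding adj_def S'_def using u x by auto
  have "far n S' \<beta> u \<subseteq> {v \<in> V. \<beta> < hops A u v \<and> \<beta> \<le> hops A x v}"
  proof
    fix v assume "v \<in> far n S' \<beta> u"
    then have v: "v \<in> V" and far': "enat \<beta> < gdist n S' u v" by (auto simp: far_def)
    have "gdist n S' u v \<le> gdist n S u v"
      unfolding gdist_eq_walk_dist by (rule walk_dist_mono) (rule mono)
    then have "enat \<beta> < enat (hops A u v)"
      using far' gdist_eq_hops[OF u v] by (metis order_less_le_trans)
    then have "\<beta> < hops A u v" by simp
    have "gdist n S' u v \<le> eSuc (gdist n S' x v)"
      unfolding gdist_eq_walk_dist by (rule walk_dist_edge[of "adj n S'", OF ux])
    also have "\<dots> \<le> eSuc (gdist n S x v)"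
      unfolding gdist_eq_walk_dist using walk_dist_mono[of A "adj n S'"] mono by simp
    finally have "enat \<beta> < eSuc (gdist n S x v)" using far' by (rule order.strict_trans2[rotated])
    then have "\<beta> \<le> hops A x v" using gdist_eq_hops[OF x(1) v] by (simp add: eSuc_enat)
    with v \<open>\<beta> < hops A u v\<close> show "v \<in> {v \<in> V. \<beta> < hops A u v \<and> \<beta> \<le> hops A x v}" by simp
  qed
  then have "sum w (far n S' \<beta> u) \<le> sum w {v \<in> V. \<beta> < hops A u v \<and> \<beta> \<le> hops A x v}"
    by (intro sum_mono2) (auto simp: weight_nonneg)
  then show ?thesis using NE_add_link[OF NE u x] unfolding S'_def by linarith
qed

text \<open>Dropping the link cuts off only \<open>l\<close> from \<open>q\<close>.\<close>
lemma pendant_weight_ge_alpha: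
  assumes lq: "pendant A l q" and lS: "l \<in> S q"
  shows "\<alpha> \<le> w l"
proof -
  have l: "l \<in> V" and q: "q \<in> V" using pendant_in_V[OF lq] by auto
  have ql: "q \<noteq> l" using lq irrefl_R unfolding pendant_def by blast
  define S' where "S' = S(q := S q - {l})"
  have "gdist n S' q v \<le> gdist n S q v" if "v \<noteq> l" for v
    unfolding gdist_eq_walk_dist
    by (rule walk_dist_avoid_pendant[OF symp_adj lq]) (use ql that in \<open>auto simp: adj_def S'_def\<close>)
  then have "far n S' \<beta> q \<subseteq> insert l (far n S \<beta> q)"
    by (auto simp: far_def dest: order_less_le_trans)
  then have "sum w (far n S' \<beta> q) \<le> sum w (insert l (far n S \<beta> q))"
    by (intro sum_mono2) (use l in \<open>auto simp: far_def weight_nonneg\<close>)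
  also have "\<dots> \<le> w l + sum w (far n S \<beta> q)"
    by (cases "l \<in> far n S \<beta> q") (auto simp: insert_absorb weight_nonneg l far_def)
  finally show ?thesis using NE_drop_link[OF NE q lS] unfolding S'_def by linarith
qed

text \<open>The left-hand side is the celebrity cost of \<open>l\<close>, which it could swap for the right-hand
  side by linking to \<open>x\<close> instead of \<open>q\<close>.\<close>
lemma pendant_swap_link:
  assumes lq: "pendant A l q" and qS: "q \<in> S l" and x: "x \<in> V" "x \<noteq> l"
  shows "sum w {y \<in> V. y \<noteq> l \<and> \<beta> \<le> hops A q y} \<le> sum w {y \<in> V. y \<noteq> l \<and> \<beta> \<le> hops A x y}"
proof -
  have l: "l \<in> V" using pendant_in_V[OF lq] by auto
  have "p = q" if "p \<in> S l" for p
    using lq that valid l unfolding pendant_def adj_def valid_profile_def by blast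
  then have Sl: "S l = {q}" using qS by blast
  define S' where "S' = S(l := {x})"
  have lx: "adj n S' l x" unfolding adj_def S'_def using l x by auto
  have "far n S' \<beta> l \<subseteq> {y \<in> V. y \<noteq> l \<and> \<beta> \<le> hops A x y}"
  proof
    fix y assume "y \<in> far n S' \<beta> l"
    then have y: "y \<in> V" and far': "enat \<beta> < gdist n S' l y" by (auto simp: far_def)
    have yl: "y \<noteq> l" using far' by (auto simp: gdist_eq_walk_dist zero_enat_def)
    have "gdist n S' x y \<le> gdist n S x y"
      unfolding gdist_eq_walk_dist
      by (rule walk_dist_avoid_pendant[OF symp_adj lq]) (use x yl in \<open>auto simp: adj_def S'_def\<close>)
    then have "gdist n S' l y \<le> eSuc (gdist n S x y)"
      using walk_dist_edge[of "adj n S'", OF lx, of y] unfolding gdist_eq_walk_dist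
      by (meson eSuc_ile_mono order_trans)
    then have "enat \<beta> < eSuc (gdist n S x y)" using far' by (rule order.strict_trans2[rotated])
    then have "\<beta> \<le> hops A x y" using gdist_eq_hops[OF x(1) y] by (simp add: eSuc_enat)
    with y yl show "y \<in> {y \<in> V. y \<noteq> l \<and> \<beta> \<le> hops A x y}" by simp
  qed
  then have "sum w (far n S' \<beta> l) \<le> sum w {y \<in> V. y \<noteq> l \<and> \<beta> \<le> hops A x y}"
    by (intro sum_mono2) (auto simp: weight_nonneg)
  moreover have "far n S \<beta> l = {y \<in> V. y \<noteq> l \<and> \<beta> \<le> hops A q y}"
  proof -
    have "\<beta> < hops A l y \<longleftrightarrow> y \<noteq> l \<and> \<beta> \<le> hops A q y" if "y \<in> V" for y
      using hops_from_pendant[OF lq that] by (cases "y = l") auto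
    then show ?thesis using far_eq[OF l] by auto
  qed
  moreover have "{x} \<subseteq> V - {l}" using x by auto
  ultimately show ?thesis using NE_deviation[OF NE l, of "{x}"] Sl unfolding S'_def by simp
qed

text \<open>Otherwise \<open>\<alpha> \<le> w l\<close>, while linking to \<open>q\<close> would save \<open>b\<close> both \<open>w l\<close> and \<open>w q\<close>.\<close>
lemma pendant_buys_own_link:
  assumes lq: "pendant A l q" and b: "b \<in> V" and far_qb: "\<beta> < hops A q b"
  shows "q \<in> S l"
proof (rule ccontr)
  assume "q \<notin> S l"
  then have "l \<in> S q" using lq unfolding pendant_def adj_def by auto
  then have w_l: "\<alpha> \<le> w l" by (rule pendant_weight_ge_alpha[OF lq])
  have l: "l \<in> V" and q: "q \<in> V" using pendant_in_V[OF lq] by auto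
  have "A q l" using lq sympD[OF sym_R] unfolding pendant_def by blast
  then have ql: "hops A q l \<le> 1" by (rule hops_le_1)
  then have "b \<noteq> l" using far_qb beta_ge_2 by auto
  have bq: "hops A b q = hops A q b" using hops_commute[OF b q] .
  have bl: "hops A b l = Suc (hops A q b)"
    using hops_commute[OF b l] hops_from_pendant[OF lq b \<open>b \<noteq> l\<close>] by simp
  have "q \<noteq> b" using far_qb by auto
  have "q \<notin> S b"
  proof
    assume "q \<in> S b"
    then have "A b q" using b q by (auto simp: adj_def)
    then show False using hops_le_1[of A b q] bq far_qb beta_ge_2 by simp
  qed
  define F where "F = far n S \<beta> b"
  have add: "sum w F \<le> \<alpha> + sum w {v \<in> V. \<beta> < hops A b v \<and> \<beta> \<le> hops A q v}"
    unfolding F_def by (rule far_weight_le_add_link[OF b q \<open>q \<noteq> b\<close> \<open>q \<notin> S b\<close>])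
  have "{l, q} \<subseteq> F" using far_eq[OF b] l q bq bl far_qb unfolding F_def by auto
  moreover have "l \<noteq> q" using \<open>A q l\<close> irrefl_R by blast
  ultimately have "sum w F = sum w (F - {l, q}) + w l + w q"
    using sum.subset_diff[of "{l, q}" F w] by (simp add: F_def far_def)
  moreover have "sum w {v \<in> V. \<beta> < hops A b v \<and> \<beta> \<le> hops A q v} \<le> sum w (F - {l, q})"
    using ql beta_ge_2 by (intro sum_mono2) (auto simp: F_def far_eq[OF b] weight_nonneg)
  ultimately have "w q \<le> 0" using add w_l unfolding F_def by linarith
  then show False using weights_pos q by force
qed

text \<open>Each of the two pendant vertices would rather link to the other's neighbour.\<close>
lemma no_far_pendant_owners:
  assumes a: "pendant A a qa" "qa \<in> S a" and b: "pendant A b qb" "qb \<in> S b"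
    and far_a: "\<beta> < hops A qa b" and far_b: "\<beta> < hops A qb a"
  shows False
proof -
  have V: "a \<in> V" "qa \<in> V" "b \<in> V" "qb \<in> V" using pendant_in_V a(1) b(1) by auto
  have "qb \<noteq> a" "qa \<noteq> b" using far_a far_b by auto
  have "A qa a" using a(1) sympD[OF sym_R] unfolding pendant_def by blast
  then have qa_a: "hops A qa a \<le> 1" by (rule hops_le_1)
  have "A qb b" using b(1) sympD[OF sym_R] unfolding pendant_def by blast
  then have qb_b: "hops A qb b \<le> 1" by (rule hops_le_1)
  define P where "P = {y \<in> V. \<beta> \<le> hops A qa y}"
  define Q where "Q = {y \<in> V. \<beta> \<le> hops A qb y}"
  have "a \<in> Q" "b \<in> P" using V far_a far_b by (auto simp: P_def Q_def)
  have "{y \<in> V. y \<noteq> a \<and> \<beta> \<le> hops A qa y} = P" "{y \<in> V. y \<noteq> a \<and> \<beta> \<le> hops A qb y} = Q - {a}"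
    "{y \<in> V. y \<noteq> b \<and> \<beta> \<le> hops A qb y} = Q" "{y \<in> V. y \<noteq> b \<and> \<beta> \<le> hops A qa y} = P - {b}"
    using qa_a qb_b beta_ge_2 by (auto simp: P_def Q_def)
  then have "sum w P \<le> sum w (Q - {a})" and "sum w Q \<le> sum w (P - {b})"
    using pendant_swap_link[OF a V(4) \<open>qb \<noteq> a\<close>] pendant_swap_link[OF b V(2) \<open>qa \<noteq> b\<close>]
    by simp_all
  moreover have "sum w (Q - {a}) = sum w Q - w a" "sum w (P - {b}) = sum w P - w b"
    using \<open>a \<in> Q\<close> \<open>b \<in> P\<close> by (simp_all add: sum_diff1 P_def Q_def)
  moreover have "0 < w a" "0 < w b" using weights_pos V by auto
  ultimately show False by linarith
qed

lemma hops_le_Suc_beta: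
  assumes "x \<in> V" and "y \<in> V"
  shows "hops A x y \<le> Suc \<beta>"
proof (rule ccontr)
  assume long: "\<not> hops A x y \<le> Suc \<beta>"
  obtain a b where ab: "a \<in> V" "b \<in> V"
    and farthest: "\<And>x y. x \<in> V \<Longrightarrow> y \<in> V \<Longrightarrow> hops A x y \<le> hops A a b"
    using farthest_pair_exists assms by blast
  have ba: "hops A b a = hops A a b" using hops_commute[OF ab(2,1)] .
  have long_ab: "Suc (Suc \<beta>) \<le> hops A a b" using farthest[OF assms] long by simp
  then have "a \<noteq> b" by auto
  obtain qb where qb: "pendant A b qb" using farthest_is_pendant[OF ab \<open>a \<noteq> b\<close> farthest] .
  obtain qa where qa: "pendant A a qa"
    using farthest_is_pendant[OF ab(2,1) \<open>a \<noteq> b\<close>[symmetric]] farthest ba by metis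
  have "hops A a b = Suc (hops A qa b)" using hops_from_pendant[OF qa ab(2)] \<open>a \<noteq> b\<close> by simp
  moreover have "hops A b a = Suc (hops A qb a)" using hops_from_pendant[OF qb ab(1)] \<open>a \<noteq> b\<close> by simp
  ultimately have far_a: "\<beta> < hops A qa b" and far_b: "\<beta> < hops A qb a" using long_ab ba by simp_all
  have "qa \<in> S a" using pendant_buys_own_link[OF qa ab(2) far_a] .
  moreover have "qb \<in> S b" using pendant_buys_own_link[OF qb ab(1) far_b] .
  ultimately show False using no_far_pendant_owners[OF qa _ qb _ far_a far_b] by blast
qed

lemma hops_second_step_lt_beta:
  assumes u: "u \<in> V" and y: "y \<in> V" and uy: "hops A u y = Suc \<beta>"
    and up: "A u p" and py: "hops A p y = \<beta>" and px: "A p x" and xy: "hops A x y = \<beta> - 1"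
    and v: "v \<in> V" and uv: "\<beta> < hops A u v"
  shows "hops A x v < \<beta>"
proof -
  have x: "x \<in> V" using edge_in_V[OF px] by blast
  have vu: "hops A v u = Suc \<beta>" using hops_le_Suc_beta[OF u v] uv hops_commute[OF u v] by simp
  have vy: "hops A v y \<le> Suc \<beta>" using hops_le_Suc_beta[OF v y] .
  have vp: "Suc (hops A v p) = hops A v u" using hops_toward[OF v up y] uy py vu vy by simp
  then have "Suc (hops A v x) = hops A v p"
    using hops_toward[OF v px y] py xy vu vy beta_ge_2 by simp
  then show ?thesis using vp vu hops_commute[OF x v] by simp
qed

lemma far_weight_le_alpha:
  assumes u: "u \<in> V"
  shows "sum w (far n S \<beta> u) \<le> \<alpha>"
proof (cases "far n S \<beta> u = {}")
  case True
  then show ?thesis using alpha_pos by simp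
next
  case False
  then obtain y where y: "y \<in> V" and "\<beta> < hops A u y" using far_eq[OF u] by auto
  then have uy: "hops A u y = Suc \<beta>" using hops_le_Suc_beta[OF u y] by simp
  obtain p where up: "A u p" and py: "hops A p y = \<beta>" using hops_SucD[OF u y uy] .
  have p: "p \<in> V" using edge_in_V[OF up] by blast
  have "hops A p y = Suc (\<beta> - 1)" using py beta_ge_2 by simp
  then obtain x where px: "A p x" and xy: "hops A x y = \<beta> - 1" using hops_SucD[OF p y] by blast
  have x: "x \<in> V" using edge_in_V[OF px] by blast
  have "x \<noteq> u" using xy uy by auto
  have "x \<notin> S u"
  proof
    assume "x \<in> S u"
    then have "A u x" using u x by (auto simp: adj_def)
    then have "hops A u y \<le> Suc (hops A x y)" using hops_neighbor_le y by blast
    then show False using uy xy beta_ge_2 by simp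
  qed
  have no_far: "{v \<in> V. \<beta> < hops A u v \<and> \<beta> \<le> hops A x v} = {}"
    using hops_second_step_lt_beta[OF u y uy up py px xy] by (auto simp: not_less[symmetric])
  show ?thesis
    using far_weight_le_add_link[OF u x \<open>x \<noteq> u\<close> \<open>x \<notin> S u\<close>] unfolding no_far by simp
qed

lemma exists_central_player:
  assumes "V \<noteq> {}"
  obtains z where "z \<in> V" and "far n S \<beta> z = {}"
proof (cases "\<exists>u\<in>V. \<exists>y\<in>V. hops A u y = Suc \<beta>")
  case True
  then obtain u y where u: "u \<in> V" and y: "y \<in> V" and uy: "hops A u y = Suc \<beta>" by blast
  obtain p where up: "A u p" and py: "hops A p y = \<beta>" using hops_SucD[OF u y uy] .
  have p: "p \<in> V" using edge_in_V[OF up] by blast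
  have "hops A p v \<le> \<beta>" if v: "v \<in> V" for v
  proof (cases "v = u")
    case True
    then show ?thesis using hops_le_1[of A, OF up] beta_ge_2 hops_commute[OF u p] by simp
  next
    case False
    then have "0 < hops A v u" using hops_eq_0_iff[OF v u] by simp
    then have "Suc (hops A v p) = hops A v u"
      using hops_toward[OF v up y] uy py hops_le_Suc_beta[OF v y] by simp
    then show ?thesis using hops_le_Suc_beta[OF v u] hops_commute[OF v p] by simp
  qed
  then have "far n S \<beta> p = {}" using far_eq[OF p] by (auto simp: not_less[symmetric])
  with p show thesis by (rule that)
next
  case False
  obtain z where z: "z \<in> V" using assms by blast
  have "hops A z y \<le> \<beta>" if "y \<in> V" for y
    using False hops_le_Suc_beta[OF z that] z that by (auto simp: le_Suc_eq)
  then have "far n S \<beta> z = {}" using far_eq[OF z] by (auto simp: not_less[symmetric])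
  with z show thesis by (rule that)
qed

lemma sum_far_weights_le:
  assumes "1 \<le> n"
  shows "(\<Sum>u\<in>V. sum w (far n S \<beta> u)) \<le> \<alpha> * (real n - 1)"
proof -
  have "V \<noteq> {}" using assms by (simp add: players_def)
  then obtain z where z: "z \<in> V" and far_z: "far n S \<beta> z = {}" by (rule exists_central_player)
  have "(\<Sum>u\<in>V. sum w (far n S \<beta> u)) = (\<Sum>u\<in>V - {z}. sum w (far n S \<beta> u))"
    using z far_z by (simp add: sum.remove)
  also have "\<dots> \<le> real (card (V - {z})) * \<alpha>"
    by (rule sum_bounded_above) (use far_weight_le_alpha in auto)
  also have "\<dots> = \<alpha> * (real n - 1)" using z assms by (simp add: of_nat_diff)
  finally show ?thesis .
qed

end

theorem theorem4:
  fixes n :: nat and w :: "nat \<Rightarrow> real" and \<alpha> :: real and \<beta> :: nat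
    and S :: "nat \<Rightarrow> nat set"
  assumes "\<forall>u\<in>players n. w u > 0"
    and "\<alpha> > 0"
    and "1 \<le> \<beta>" and "\<beta> \<le> n - 1"
    and "star_celebrity_game n w \<alpha> \<beta>"
    and "\<beta> > 1"
    and "is_NE n w \<alpha> \<beta> S"
    and "is_tree n S"
  shows "social_cost n w \<alpha> \<beta> S \<le> 2 * opt n w \<alpha> \<beta>"
proof -
  interpret NE_tree n w \<alpha> \<beta> S using assms by unfold_locales auto
  have n: "3 \<le> n" using assms(4,6) by linarith
  have links: "(\<Sum>u\<in>V. card (S u)) = n - 1"
    using card_edges_NE[OF NE alpha_pos] tree unfolding is_tree_def by simp
  have upper: "social_cost n w \<alpha> \<beta> S \<le> 2 * (\<alpha> * (real n - 1))"
    using social_cost_eq[of n w \<alpha> \<beta> S] links sum_far_weights_le n by (simp add: of_nat_diff)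
  have "(\<Sum>u\<in>V. card (S u)) \<noteq> 0" using links n by simp
  then obtain u where u: "u \<in> V" and "card (S u) \<noteq> 0" by (meson sum.neutral)
  then obtain v where v: "v \<in> S u" by (metis card.empty ex_in_conv)
  have "\<alpha> \<le> sum w V" using alpha_le_total_weight[OF NE _ u v] weight_nonneg by blast
  then have "\<alpha> * (real n - 1) \<le> opt n w \<alpha> \<beta>"
    using social_cost_ge weight_nonneg alpha_pos by (intro le_opt) auto
  with upper show ?thesis by simp
qed

end
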